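(* Let $k$ be a field and $p>7$ an odd prime. Let $R^2_p$ be the $k$-algebra generated by $y_0,\dots,y_{p-1}$ (indices taken modulo $p$) with relations $y_i^2=0$ for $0\le i<p$, and $\sum_{i=0}^{p-1}y_iy_{i+k}=0$ for $1\le k\le p-1$. Then $R^2_p$ is infinite-dimensional. *)

theory Defs
  imports "HOL-Computational_Algebra.Primes"
begin

text \<open>Free (noncommutative) associative k-algebra on generators y_0,...,y_{p-1}:
  finitely supported functions from words (lists of generator indices < p) to k.\<close>

type_synonym 'k ncpoly = "nat list \<Rightarrow> 'k"

definition ncpoly_set :: "nat \<Rightarrow> ('k::field) ncpoly set" where
  "ncpoly_set p = {f. finite {w. f w \<noteq> 0} \<and> (\<forall>w. f w \<noteq> 0 \<longrightarrow> set w \<subseteq> {..<p})}"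

definition nc_add :: "('k::field) ncpoly \<Rightarrow> 'k ncpoly \<Rightarrow> 'k ncpoly" where
  "nc_add f g = (\<lambda>w. f w + g w)"

definition nc_smult :: "'k::field \<Rightarrow> 'k ncpoly \<Rightarrow> 'k ncpoly" where
  "nc_smult c f = (\<lambda>w. c * f w)"

definition nc_zero :: "('k::field) ncpoly" where
  "nc_zero = (\<lambda>w. 0)"

definition nc_mult :: "('k::field) ncpoly \<Rightarrow> 'k ncpoly \<Rightarrow> 'k ncpoly" where
  "nc_mult f g = (\<lambda>w. \<Sum>i\<in>{0..length w}. f (take i w) * g (drop i w))"

definition nc_var :: "nat \<Rightarrow> ('k::field) ncpoly" where
  "nc_var i = (\<lambda>w. if w = [i] then 1 else 0)"

inductive_set nc_ideal :: "nat \<Rightarrow> ('k::field) ncpoly set \<Rightarrow> 'k ncpoly set"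
  for p :: nat and rels :: "'k ncpoly set" where
  gen: "r \<in> rels \<Longrightarrow> r \<in> nc_ideal p rels"
| zero: "nc_zero \<in> nc_ideal p rels"
| add: "f \<in> nc_ideal p rels \<Longrightarrow> g \<in> nc_ideal p rels \<Longrightarrow> nc_add f g \<in> nc_ideal p rels"
| smult: "f \<in> nc_ideal p rels \<Longrightarrow> nc_smult c f \<in> nc_ideal p rels"
| lmult: "f \<in> nc_ideal p rels \<Longrightarrow> a \<in> ncpoly_set p \<Longrightarrow> nc_mult a f \<in> nc_ideal p rels"
| rmult: "f \<in> nc_ideal p rels \<Longrightarrow> a \<in> ncpoly_set p \<Longrightarrow> nc_mult f a \<in> nc_ideal p rels"

definition quotient_fin_dim :: "nat \<Rightarrow> ('k::field) ncpoly set \<Rightarrow> bool" where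
  "quotient_fin_dim p rels \<longleftrightarrow>
     (\<exists>S. finite S \<and> S \<subseteq> ncpoly_set p \<and>
        (\<forall>f\<in>ncpoly_set p. \<exists>c :: 'k ncpoly \<Rightarrow> 'k.
            (\<lambda>w. f w - (\<Sum>s\<in>S. c s * s w)) \<in> nc_ideal p rels))"

definition R2_rels :: "nat \<Rightarrow> ('k::field) ncpoly set" where
  "R2_rels p =
     {nc_mult (nc_var i) (nc_var i) | i. i < p} \<union>
     {(\<lambda>w. \<Sum>i<p. nc_mult (nc_var i) (nc_var ((i + j) mod p)) w) | j. 1 \<le> j \<and> j \<le> p - 1}"

end

theory Submission
  imports Defs "HOL-Library.Function_Algebras" HOL.Vector_Spaces
begin

(* Golod-Shafarevich counting. Let A_n be the span of the words of length n, I_n the degree-n part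
   of the ideal generated by a finite set R of quadratic relations, and e_n = p^n - dim I_n the
   dimension of the degree-n part of the quotient. Since I_(n+2) = sum_x y_x I_(n+1) + R A_n and
   R I_n is contained in sum_x y_x I_(n+1), choosing a complement C of I_n in A_n with
   dim C = e_n gives dim I_(n+2) <= p dim I_(n+1) + |R| e_n, that is
   e_(n+2) >= p e_(n+1) - |R| e_n. If c^2 + |R| <= c p for some c > 0 this forces
   e_(n+1) >= c e_n > 0, so the quotient is nonzero in every degree; as the homogeneous components
   of an ideal element lie in the I_n, a single word of large length cannot be reduced modulo
   the ideal into the span of finitely many given elements. For R^2_p we have |R| <= 2p, and
   c = 3 works as soon as p >= 9. *)

section \<open>Dimension bounds for finite sets of vectors\<close>

context vector_space
begin

lemma dim_le_dim_of_subset_span: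
  assumes "V \<subseteq> span W" "finite W"
  shows "dim V \<le> dim W"
proof -
  obtain B where B: "B \<subseteq> W" "W \<subseteq> span B" "card B = dim W"
    by (rule basis_exists)
  have "V \<subseteq> span B"
    using assms(1) span_mono[OF B(2)] by (simp add: span_span)
  moreover have "finite B"
    using B(1) assms(2) by (rule finite_subset)
  ultimately show ?thesis
    using dim_le_card B(3) by metis
qed

lemma dim_Un_le:
  assumes "finite A" "finite B"
  shows "dim (A \<union> B) \<le> dim A + dim B"
proof -
  obtain BA where BA: "BA \<subseteq> A" "A \<subseteq> span BA" "card BA = dim A"
    by (rule basis_exists)
  obtain BB where BB: "BB \<subseteq> B" "B \<subseteq> span BB" "card BB = dim B"
    by (rule basis_exists)
  have "A \<union> B \<subseteq> span (BA \<union> BB)"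
    using BA(2) BB(2) span_mono[of BA "BA \<union> BB"] span_mono[of BB "BA \<union> BB"] by blast
  moreover have "finite (BA \<union> BB)"
    using BA(1) BB(1) assms by (meson finite_UnI finite_subset)
  ultimately have "dim (A \<union> B) \<le> card (BA \<union> BB)"
    by (rule dim_le_card)
  also have "\<dots> \<le> dim A + dim B"
    using card_Un_le BA(3) BB(3) by metis
  finally show ?thesis .
qed

lemma dim_UN_le:
  assumes "finite I" "\<And>i. i \<in> I \<Longrightarrow> finite (A i)"
  shows "dim (\<Union>i\<in>I. A i) \<le> (\<Sum>i\<in>I. dim (A i))"
  using assms
proof (induction I rule: finite_induct)
  case empty
  show ?case
    using dim_le_card'[of "{}"] by simp
next
  case (insert i I)
  then have "dim (A i \<union> (\<Union>j\<in>I. A j)) \<le> dim (A i) + dim (\<Union>j\<in>I. A j)"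
    by (intro dim_Un_le) auto
  with insert show ?case
    by simp
qed

lemma dim_linear_image_le:
  assumes "Vector_Spaces.linear scale scale f" "finite A"
  shows "dim (f ` A) \<le> dim A"
proof -
  interpret f: Vector_Spaces.linear scale scale f by fact
  obtain B where B: "B \<subseteq> A" "A \<subseteq> span B" "card B = dim A"
    by (rule basis_exists)
  have "finite B"
    using B(1) assms(2) by (rule finite_subset)
  have "f ` A \<subseteq> span (f ` B)"
    using image_mono[OF B(2), of f] by (simp add: f.span_image)
  then have "dim (f ` A) \<le> card (f ` B)"
    using \<open>finite B\<close> by (simp add: dim_le_card)
  also have "\<dots> \<le> dim A"
    using card_image_le[OF \<open>finite B\<close>, of f] B(3) by simp
  finally show ?thesis .
qed

lemma exists_complement_of_subset_span:
  assumes "finite M" "A \<subseteq> span M"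
  obtains C where "finite C" "card C + dim A = dim M" "M \<subseteq> span (C \<union> A)"
proof -
  obtain B where B: "B \<subseteq> A" "independent B" "A \<subseteq> span B" "card B = dim A"
    by (rule basis_exists)
  obtain B' where B': "B \<subseteq> B'" "B' \<subseteq> B \<union> M" "independent B'"
    "B \<union> M \<subseteq> span B'"
    using maximal_independent_subset_extend[OF _ B(2), of "B \<union> M"] by blast
  have "B \<subseteq> span M"
    using B(1) assms(2) by (rule subset_trans)
  then have "span (B \<union> M) = span M"
    by (auto simp: span_eq intro: span_base)
  have "B' \<subseteq> span M"
    using B'(2) \<open>B \<subseteq> span M\<close> span_superset[of M] by blast
  then have "finite B'"
    using independent_span_bound[OF assms(1) B'(3)] by blast
  have "card B' = dim M"
    using basis_card_eq_dim[OF B'(2,4,3)] span_eq_dim[OF \<open>span (B \<union> M) = span M\<close>] by simp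
  moreover have "card (B' - B) = card B' - card B"
    using \<open>finite B'\<close> B'(1) by (meson card_Diff_subset finite_subset)
  moreover have "card B \<le> card B'"
    using \<open>finite B'\<close> B'(1) by (rule card_mono)
  ultimately have "card (B' - B) + dim A = dim M"
    using B(4) by linarith
  moreover have "M \<subseteq> span ((B' - B) \<union> A)"
    using B'(4) B(1) span_mono[of B' "(B' - B) \<union> A"] by blast
  ultimately show ?thesis
    using that \<open>finite B'\<close> by blast
qed

end

section \<open>The free algebra as a vector space\<close>

lemma sum_fun_apply: "(\<Sum>x\<in>A. f x) w = (\<Sum>x\<in>A. f x w)"
  by (induction A rule: infinite_finite_induct) auto

lemma nc_smult_apply: "nc_smult c f w = c * f w"
  by (simp add: nc_smult_def)

interpretation ncpoly: vector_space "nc_smult :: 'k::field \<Rightarrow> 'k ncpoly \<Rightarrow> 'k ncpoly"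
  by unfold_locales (simp_all add: nc_smult_def fun_eq_iff algebra_simps)

definition mon :: "nat list \<Rightarrow> 'k::field ncpoly" where
  "mon u = (\<lambda>w. if w = u then 1 else 0)"

definition words :: "nat \<Rightarrow> nat \<Rightarrow> nat list set" where
  "words p n = {w. set w \<subseteq> {..<p} \<and> length w = n}"

definition homogeneous :: "nat \<Rightarrow> nat \<Rightarrow> 'k::field ncpoly \<Rightarrow> bool" where
  "homogeneous p n f \<longleftrightarrow> (\<forall>w. f w \<noteq> 0 \<longrightarrow> w \<in> words p n)"

definition homog_part :: "nat \<Rightarrow> 'k::field ncpoly \<Rightarrow> 'k ncpoly" where
  "homog_part n f = (\<lambda>w. if length w = n then f w else 0)"

lemma finite_words: "finite (words p n)"
  unfolding words_def by (rule finite_lists_length_eq) simp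

lemma card_words: "card (words p n) = p ^ n"
  unfolding words_def using card_lists_length_eq[of "{..<p}" n] by simp

lemma nc_var_eq_mon: "nc_var i = mon [i]"
  by (simp add: nc_var_def mon_def)

lemma inj_mon: "inj mon"
  by (auto simp: inj_def mon_def fun_eq_iff)

lemma homogeneous_mon: "w \<in> words p n \<Longrightarrow> homogeneous p n (mon w)"
  by (simp add: homogeneous_def mon_def)

lemma ncpoly_eq_sum_mon:
  assumes "finite U" "{u. f u \<noteq> 0} \<subseteq> U"
  shows "f = (\<Sum>u\<in>U. nc_smult (f u) (mon u))"
proof
  fix w
  have "(\<Sum>u\<in>U. nc_smult (f u) (mon u)) w = (\<Sum>u\<in>U. if u = w then f u else 0)"
    by (auto simp: sum_fun_apply nc_smult_apply mon_def intro!: sum.cong)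
  also have "\<dots> = f w"
    using assms by auto
  finally show "f w = (\<Sum>u\<in>U. nc_smult (f u) (mon u)) w" ..
qed

lemma homog_part_homogeneous: "homogeneous p m f \<Longrightarrow> homog_part n f = (if n = m then f else 0)"
  by (auto simp: fun_eq_iff homog_part_def homogeneous_def words_def)

lemma linear_homog_part: "Vector_Spaces.linear nc_smult nc_smult (homog_part n)"
  by (simp add: Vector_Spaces.linear_iff ncpoly.vector_space_axioms homog_part_def nc_smult_apply fun_eq_iff)

lemma linear_nc_mult_left: "Vector_Spaces.linear nc_smult nc_smult (\<lambda>a. nc_mult a f)"
  by (simp add: Vector_Spaces.linear_iff ncpoly.vector_space_axioms nc_mult_def nc_smult_apply fun_eq_iff
      algebra_simps sum.distrib sum_distrib_left)

lemma linear_nc_mult_right: "Vector_Spaces.linear nc_smult nc_smult (nc_mult a)"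
  by (simp add: Vector_Spaces.linear_iff ncpoly.vector_space_axioms nc_mult_def nc_smult_apply fun_eq_iff
      algebra_simps sum.distrib sum_distrib_left)

lemma linear_in_span_if_mon_in_span:
  assumes "Vector_Spaces.linear nc_smult nc_smult F" "finite U" "{u. a u \<noteq> 0} \<subseteq> U"
    and "\<And>u. u \<in> U \<Longrightarrow> F (mon u) \<in> ncpoly.span S"
  shows "F a \<in> ncpoly.span S"
proof -
  interpret F: Vector_Spaces.linear nc_smult nc_smult F
    by fact
  have "F a = F (\<Sum>u\<in>U. nc_smult (a u) (mon u))"
    using ncpoly_eq_sum_mon[OF assms(2,3)] by (rule arg_cong)
  also have "\<dots> = (\<Sum>u\<in>U. nc_smult (a u) (F (mon u)))"
    by (simp add: F.sum F.scale)
  also have "\<dots> \<in> ncpoly.span S"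
    using assms(4) by (intro ncpoly.span_sum ncpoly.span_scale)
  finally show ?thesis .
qed

lemma bij_betw_splits: "bij_betw (\<lambda>i. (take i w, drop i w)) {0..length w} {(u, v). u @ v = w}"
  by (rule bij_betw_byWitness[where f' = "\<lambda>(u, v). length u"]) auto

lemma finite_splits: "finite {(u, v). u @ v = w}"
  using bij_betw_finite[OF bij_betw_splits] by simp

lemma nc_mult_eq_sum_splits: "nc_mult f g w = (\<Sum>(u, v)\<in>{(u, v). u @ v = w}. f u * g v)"
  unfolding nc_mult_def by (subst sum.reindex_bij_betw[OF bij_betw_splits, symmetric]) simp

lemma nc_mult_assoc: "nc_mult (nc_mult f g) h = nc_mult f (nc_mult g h)"
proof
  fix w
  let ?S = "\<lambda>w. {(u, v). u @ v = w}"
  have "nc_mult (nc_mult f g) h w = (\<Sum>x\<in>?S w. \<Sum>y\<in>?S (fst x). f (fst y) * g (snd y) * h (snd x))"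
    by (simp add: nc_mult_eq_sum_splits sum_distrib_right split_def)
  also have "\<dots> = (\<Sum>(x, y)\<in>Sigma (?S w) (\<lambda>x. ?S (fst x)). f (fst y) * g (snd y) * h (snd x))"
    by (rule sum.Sigma) (auto simp: finite_splits)
  also have "\<dots> = (\<Sum>(a, b, c)\<in>{(a, b, c). a @ b @ c = w}. f a * g b * h c)"
    by (rule sum.reindex_bij_witness[where i = "\<lambda>(a, b, c). ((a @ b, c), (a, b))"
          and j = "\<lambda>((d, c), (a, b)). (a, b, c)"]) auto
  also have "\<dots> = (\<Sum>(x, y)\<in>Sigma (?S w) (\<lambda>x. ?S (snd x)). f (fst x) * g (fst y) * h (snd y))"
    by (rule sum.reindex_bij_witness[where i = "\<lambda>((a, e), (b, c)). (a, b, c)"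
          and j = "\<lambda>(a, b, c). ((a, b @ c), (b, c))"]) auto
  also have "\<dots> = (\<Sum>x\<in>?S w. \<Sum>y\<in>?S (snd x). f (fst x) * g (fst y) * h (snd y))"
    by (rule sum.Sigma[symmetric]) (auto simp: finite_splits)
  also have "\<dots> = nc_mult f (nc_mult g h) w"
    by (simp add: nc_mult_eq_sum_splits sum_distrib_left split_def mult.assoc)
  finally show "nc_mult (nc_mult f g) h w = nc_mult f (nc_mult g h) w" .
qed

lemma nc_mult_mon_mon: "nc_mult (mon u) (mon v) = mon (u @ v)"
proof
  fix w
  have "nc_mult (mon u) (mon v) w = (\<Sum>x\<in>{(a, b). a @ b = w}. if x = (u, v) then 1 else 0)"
    unfolding nc_mult_eq_sum_splits by (rule sum.cong) (auto simp: mon_def split: if_splits)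
  then show "nc_mult (mon u) (mon v) w = mon (u @ v) w"
    by (auto simp: finite_splits mon_def)
qed

lemma nc_mult_mon_Nil_left [simp]: "nc_mult (mon []) f = f"
proof
  fix w
  have "(\<Sum>(u, v)\<in>{(u, v). u @ v = w}. mon [] u * f v)
      = (\<Sum>x\<in>{(u, v). u @ v = w}. if x = ([], w) then f w else 0)"
    by (rule sum.cong) (auto simp: mon_def split: if_splits)
  then show "nc_mult (mon []) f w = f w"
    by (simp add: nc_mult_eq_sum_splits finite_splits)
qed

lemma nc_mult_mon_Nil_right [simp]: "nc_mult f (mon []) = f"
proof
  fix w
  have "(\<Sum>(u, v)\<in>{(u, v). u @ v = w}. f u * mon [] v)
      = (\<Sum>x\<in>{(u, v). u @ v = w}. if x = (w, []) then f w else 0)"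
    by (rule sum.cong) (auto simp: mon_def split: if_splits)
  then show "nc_mult f (mon []) w = f w"
    by (simp add: nc_mult_eq_sum_splits finite_splits)
qed

lemma homog_part_nc_mult_left:
  assumes "homogeneous p m a"
  shows "homog_part n (nc_mult a f) = (if m \<le> n then nc_mult a (homog_part (n - m) f) else 0)"
proof
  fix w
  have deg: "a u = 0" if "length u \<noteq> m" for u
    using assms that by (auto simp: homogeneous_def words_def)
  show "homog_part n (nc_mult a f) w = (if m \<le> n then nc_mult a (homog_part (n - m) f) else 0) w"
    unfolding homog_part_def nc_mult_eq_sum_splits
    by (auto simp: deg intro!: sum.cong sum.neutral)
qed

lemma homog_part_nc_mult_right:
  assumes "homogeneous p m a"
  shows "homog_part n (nc_mult f a) = (if m \<le> n then nc_mult (homog_part (n - m) f) a else 0)"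
proof
  fix w
  have deg: "a v = 0" if "length v \<noteq> m" for v
    using assms that by (auto simp: homogeneous_def words_def)
  show "homog_part n (nc_mult f a) w = (if m \<le> n then nc_mult (homog_part (n - m) f) a else 0) w"
    unfolding homog_part_def nc_mult_eq_sum_splits
    by (auto simp: deg intro!: sum.cong sum.neutral)
qed

lemma homogeneous_nc_mult:
  assumes "homogeneous p m a" "homogeneous p n b"
  shows "homogeneous p (m + n) (nc_mult a b)"
  unfolding homogeneous_def
proof (intro allI impI)
  fix w
  assume "nc_mult a b w \<noteq> 0"
  then obtain u v where "u @ v = w" "a u \<noteq> 0" "b v \<noteq> 0"
    unfolding nc_mult_eq_sum_splits by (auto elim: sum.not_neutral_contains_not_neutral)
  with assms have "u \<in> words p m" "v \<in> words p n"
    by (auto simp: homogeneous_def)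
  with \<open>u @ v = w\<close> show "w \<in> words p (m + n)"
    by (auto simp: words_def)
qed

lemma homogeneous_in_span_mon: "homogeneous p n f \<Longrightarrow> f \<in> ncpoly.span (mon ` words p n)"
  using linear_in_span_if_mon_in_span[OF ncpoly.linear_id finite_words, of f p n "mon ` words p n"]
  by (auto simp: homogeneous_def intro: ncpoly.span_base)

lemma independent_mon: "finite W \<Longrightarrow> ncpoly.independent (mon ` W :: 'k::field ncpoly set)"
proof (rule ncpoly.independent_if_scalars_zero)
  fix c :: "'k ncpoly \<Rightarrow> 'k" and x :: "'k ncpoly"
  assume W: "finite W" and sum: "(\<Sum>x\<in>mon ` W. nc_smult (c x) x) = 0" and "x \<in> mon ` W"
  then obtain w where "w \<in> W" "x = mon w"
    by blast
  have "(\<Sum>x\<in>mon ` W. nc_smult (c x) x) w = (\<Sum>v\<in>W. c (mon v) * (mon v w :: 'k))"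
    by (simp add: sum.reindex[OF inj_on_subset[OF inj_mon]] sum_fun_apply nc_smult_apply)
  also have "\<dots> = (\<Sum>v\<in>W. if v = w then c (mon v) else 0)"
    by (rule sum.cong) (auto simp: mon_def)
  also have "\<dots> = c x"
    using W \<open>w \<in> W\<close> \<open>x = mon w\<close> by simp
  finally show "c x = 0"
    using sum by simp
qed simp

lemma dim_mon_words: "ncpoly.dim (mon ` words p n :: 'k::field ncpoly set) = p ^ n"
  using ncpoly.dim_eq_card_independent[OF independent_mon[OF finite_words]]
    card_image[OF inj_on_subset[OF inj_mon]] card_words by (metis subset_UNIV)

section \<open>Homogeneous components of an ideal with quadratic relations\<close>

definition quadratic_rels :: "nat \<Rightarrow> 'k::field ncpoly set \<Rightarrow> bool" where
  "quadratic_rels p rels \<longleftrightarrow> finite rels \<and> (\<forall>r\<in>rels. homogeneous p 2 r)"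

(* Finite spanning sets of the homogeneous components I_n of the ideal, built along
   I_(n+2) = sum_x y_x I_(n+1) + rels A_n. *)
fun ideal_gens :: "nat \<Rightarrow> 'k::field ncpoly set \<Rightarrow> nat \<Rightarrow> 'k ncpoly set" where
  "ideal_gens p rels 0 = {}"
| "ideal_gens p rels (Suc 0) = {}"
| "ideal_gens p rels (Suc (Suc n)) =
     (\<Union>x<p. nc_mult (nc_var x) ` ideal_gens p rels (Suc n)) \<union>
     {nc_mult r (mon v) | r v. r \<in> rels \<and> v \<in> words p n}"

lemma finite_ideal_gens: "finite rels \<Longrightarrow> finite (ideal_gens p rels n)"
proof (induction p rels n rule: ideal_gens.induct)
  case (3 p rels n)
  then show ?case
    using finite_image_set2[of "\<lambda>r. r \<in> rels" "\<lambda>v. v \<in> words p n"] finite_words by auto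
qed simp_all

lemma homogeneous_ideal_gens:
  assumes "quadratic_rels p rels" "g \<in> ideal_gens p rels n"
  shows "homogeneous p n g"
  using assms
proof (induction p rels n arbitrary: g rule: ideal_gens.induct)
  case (3 p rels n)
  from "3.prems"(2) consider
      (var) x h where "x < p" "h \<in> ideal_gens p rels (Suc n)" "g = nc_mult (nc_var x) h"
    | (rel) r v where "r \<in> rels" "v \<in> words p n" "g = nc_mult r (mon v)"
    by auto
  then show ?case
  proof cases
    case var
    then have "homogeneous p 1 (nc_var x)"
      by (simp add: nc_var_eq_mon homogeneous_mon words_def)
    with var "3.IH" "3.prems"(1) show ?thesis
      using homogeneous_nc_mult by fastforce
  next
    case rel
    with "3.prems"(1) have "homogeneous p (2 + n) (nc_mult r (mon v))"
      by (intro homogeneous_nc_mult homogeneous_mon) (auto simp: quadratic_rels_def)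
    with rel show ?thesis
      by (simp add: eval_nat_numeral)
  qed
qed simp_all

lemma nc_var_mult_ideal_gens:
  "x < p \<Longrightarrow> nc_mult (nc_var x) ` ideal_gens p rels n \<subseteq> ideal_gens p rels (Suc n)"
  by (cases n) auto

lemma mon_mult_ideal_gens:
  "set u \<subseteq> {..<p} \<Longrightarrow>
    nc_mult (mon u) ` ideal_gens p rels m \<subseteq> ideal_gens p rels (length u + m)"
proof (induction u)
  case (Cons x u)
  have "nc_mult (mon (x # u)) g = nc_mult (nc_var x) (nc_mult (mon u) g)" for g :: "'a ncpoly"
    by (simp add: nc_var_eq_mon nc_mult_assoc[symmetric] nc_mult_mon_mon)
  with Cons nc_var_mult_ideal_gens[of x p rels "length u + m"] show ?case
    by auto
qed simp

lemma ideal_gens_mult_mon: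
  "set v \<subseteq> {..<p} \<Longrightarrow>
    (\<lambda>g. nc_mult g (mon v)) ` ideal_gens p rels m \<subseteq> ideal_gens p rels (m + length v)"
proof (induction p rels m rule: ideal_gens.induct)
  case (3 p rels n)
  show ?case
  proof
    fix g
    assume "g \<in> (\<lambda>g. nc_mult g (mon v)) ` ideal_gens p rels (Suc (Suc n))"
    then consider
        (var) x h where "x < p" "h \<in> ideal_gens p rels (Suc n)"
          "g = nc_mult (nc_mult (nc_var x) h) (mon v)"
      | (rel) r u where "r \<in> rels" "u \<in> words p n" "g = nc_mult (nc_mult r (mon u)) (mon v)"
      by auto
    then show "g \<in> ideal_gens p rels (Suc (Suc n) + length v)"
    proof cases
      case var
      with "3.IH" "3.prems" have "nc_mult h (mon v) \<in> ideal_gens p rels (Suc (n + length v))"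
        by auto
      with var show ?thesis
        by (auto simp: nc_mult_assoc)
    next
      case rel
      with "3.prems" have "u @ v \<in> words p (n + length v)"
        by (auto simp: words_def)
      with rel show ?thesis
        by (auto simp: nc_mult_assoc nc_mult_mon_mon)
    qed
  qed
qed simp_all

lemma homog_part_mon_mult_in_span:
  assumes "set u \<subseteq> {..<p}" "\<And>m. homog_part m f \<in> ncpoly.span (ideal_gens p rels m)"
  shows "homog_part n (nc_mult (mon u) f) \<in> ncpoly.span (ideal_gens p rels n)"
proof -
  interpret mon_mult: Vector_Spaces.linear nc_smult nc_smult "nc_mult (mon u)"
    by (rule linear_nc_mult_right)
  have "nc_mult (mon u) (homog_part (n - length u) f)
      \<in> ncpoly.span (nc_mult (mon u) ` ideal_gens p rels (n - length u))"
    using assms(2) mon_mult.span_image by blast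
  also have "\<dots> \<subseteq> ncpoly.span (ideal_gens p rels (length u + (n - length u)))"
    using mon_mult_ideal_gens[OF assms(1)] by (rule ncpoly.span_mono)
  finally show ?thesis
    using homog_part_nc_mult_left[OF homogeneous_mon, of u p "length u" n f] assms(1)
    by (auto simp: words_def ncpoly.span_zero)
qed

lemma homog_part_mult_mon_in_span:
  assumes "set u \<subseteq> {..<p}" "\<And>m. homog_part m f \<in> ncpoly.span (ideal_gens p rels m)"
  shows "homog_part n (nc_mult f (mon u)) \<in> ncpoly.span (ideal_gens p rels n)"
proof -
  interpret mult_mon: Vector_Spaces.linear nc_smult nc_smult "\<lambda>g. nc_mult g (mon u)"
    by (rule linear_nc_mult_left)
  have "nc_mult (homog_part (n - length u) f) (mon u)
      \<in> ncpoly.span ((\<lambda>g. nc_mult g (mon u)) ` ideal_gens p rels (n - length u))"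
    using assms(2) mult_mon.span_image by blast
  also have "\<dots> \<subseteq> ncpoly.span (ideal_gens p rels (n - length u + length u))"
    using ideal_gens_mult_mon[OF assms(1)] by (rule ncpoly.span_mono)
  finally show ?thesis
    using homog_part_nc_mult_right[OF homogeneous_mon, of u p "length u" n f] assms(1)
    by (auto simp: words_def ncpoly.span_zero)
qed

lemma homog_part_ideal_in_span_ideal_gens:
  fixes rels :: "'k::field ncpoly set"
  assumes "quadratic_rels p rels" "f \<in> nc_ideal p rels"
  shows "homog_part n f \<in> ncpoly.span (ideal_gens p rels n)"
  using assms(2)
proof (induction arbitrary: n rule: nc_ideal.induct)
  case (gen r)
  with assms(1) have "homogeneous p 2 r"
    by (simp add: quadratic_rels_def)
  then have "homog_part n r = (if n = 2 then r else 0)"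
    by (rule homog_part_homogeneous)
  moreover have "r \<in> ideal_gens p rels 2"
    using gen nc_mult_mon_Nil_right[of r] by (force simp: numeral_2_eq_2 words_def)
  ultimately show ?case
    by (simp add: ncpoly.span_base ncpoly.span_zero)
next
  case zero
  have "homog_part n (nc_zero :: 'k ncpoly) = 0"
    by (simp add: fun_eq_iff homog_part_def nc_zero_def)
  then show ?case
    using ncpoly.span_zero by metis
next
  case (add f g)
  have "homog_part n (nc_add f g) = homog_part n f + homog_part n g"
    by (simp add: fun_eq_iff homog_part_def nc_add_def)
  with add.IH show ?case
    using ncpoly.span_add by metis
next
  case (smult f c)
  have "homog_part n (nc_smult c f) = nc_smult c (homog_part n f)"
    by (simp add: fun_eq_iff homog_part_def nc_smult_apply)
  with smult.IH show ?case
    using ncpoly.span_scale by metis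
next
  case (lmult f a)
  have "Vector_Spaces.linear nc_smult nc_smult (\<lambda>a. homog_part n (nc_mult a f))"
    using Vector_Spaces.linear_compose[OF linear_nc_mult_left linear_homog_part] by (simp add: o_def)
  then show ?case
  proof (rule linear_in_span_if_mon_in_span)
    show "finite {u. a u \<noteq> 0}"
      using \<open>a \<in> ncpoly_set p\<close> by (simp add: ncpoly_set_def)
    fix u
    assume "u \<in> {u. a u \<noteq> 0}"
    with \<open>a \<in> ncpoly_set p\<close> have "set u \<subseteq> {..<p}"
      by (simp add: ncpoly_set_def)
    then show "homog_part n (nc_mult (mon u) f) \<in> ncpoly.span (ideal_gens p rels n)"
      using lmult.IH by (rule homog_part_mon_mult_in_span)
  qed simp
next
  case (rmult f a)
  have "Vector_Spaces.linear nc_smult nc_smult (\<lambda>a. homog_part n (nc_mult f a))"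
    using Vector_Spaces.linear_compose[OF linear_nc_mult_right linear_homog_part] by (simp add: o_def)
  then show ?case
  proof (rule linear_in_span_if_mon_in_span)
    show "finite {u. a u \<noteq> 0}"
      using \<open>a \<in> ncpoly_set p\<close> by (simp add: ncpoly_set_def)
    fix u
    assume "u \<in> {u. a u \<noteq> 0}"
    with \<open>a \<in> ncpoly_set p\<close> have "set u \<subseteq> {..<p}"
      by (simp add: ncpoly_set_def)
    then show "homog_part n (nc_mult f (mon u)) \<in> ncpoly.span (ideal_gens p rels n)"
      using rmult.IH by (rule homog_part_mult_mon_in_span)
  qed simp
qed

section \<open>Golod--Shafarevich counting\<close>

lemma ideal_gens_subset_span_mon:
  "quadratic_rels p rels \<Longrightarrow> ideal_gens p rels n \<subseteq> ncpoly.span (mon ` words p n)"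
  using homogeneous_ideal_gens homogeneous_in_span_mon by blast

lemma rel_mult_ideal_gens_in_span:
  assumes "homogeneous p 2 r" "g \<in> ideal_gens p rels n"
  shows "nc_mult r g \<in> ncpoly.span (\<Union>x<p. nc_mult (nc_var x) ` ideal_gens p rels (Suc n))"
proof (rule linear_in_span_if_mon_in_span[OF linear_nc_mult_left finite_words])
  show "{u. r u \<noteq> 0} \<subseteq> words p 2"
    using assms(1) by (auto simp: homogeneous_def)
  fix u
  assume "u \<in> words p 2"
  then obtain a b where "u = [a, b]" "a < p" "b < p"
    by (auto simp: words_def numeral_2_eq_2 length_Suc_conv)
  then have "nc_mult (mon u) g = nc_mult (nc_var a) (nc_mult (nc_var b) g)"
    by (simp add: nc_var_eq_mon nc_mult_assoc[symmetric] nc_mult_mon_mon)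
  moreover have "nc_mult (nc_var b) g \<in> ideal_gens p rels (Suc n)"
    using nc_var_mult_ideal_gens[OF \<open>b < p\<close>] assms(2) by blast
  ultimately show "nc_mult (mon u) g \<in> ncpoly.span (\<Union>x<p. nc_mult (nc_var x) ` ideal_gens p rels (Suc n))"
    using \<open>a < p\<close> by (blast intro: ncpoly.span_base)
qed

lemma ideal_gens_Suc_Suc_subset_span:
  assumes "quadratic_rels p rels" "mon ` words p n \<subseteq> ncpoly.span (C \<union> ideal_gens p rels n)"
  shows "ideal_gens p rels (Suc (Suc n)) \<subseteq> ncpoly.span
    ((\<Union>x<p. nc_mult (nc_var x) ` ideal_gens p rels (Suc n)) \<union>
     (\<lambda>(r, c). nc_mult r c) ` (rels \<times> C))"
    (is "_ \<subseteq> ncpoly.span (?P \<union> ?Q)")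
proof
  fix g
  assume "g \<in> ideal_gens p rels (Suc (Suc n))"
  then consider "g \<in> ?P" | r v where "r \<in> rels" "v \<in> words p n" "g = nc_mult r (mon v)"
    by auto
  then show "g \<in> ncpoly.span (?P \<union> ?Q)"
  proof cases
    case 1
    then show ?thesis
      by (simp add: ncpoly.span_base)
  next
    case 2
    interpret mult: Vector_Spaces.linear nc_smult nc_smult "nc_mult r"
      by (rule linear_nc_mult_right)
    have "homogeneous p 2 r"
      using assms(1) \<open>r \<in> rels\<close> by (simp add: quadratic_rels_def)
    then have "nc_mult r ` ideal_gens p rels n \<subseteq> ncpoly.span ?P"
      using rel_mult_ideal_gens_in_span by blast
    moreover have "nc_mult r ` C \<subseteq> ?Q"
      using \<open>r \<in> rels\<close> by auto
    ultimately have "nc_mult r ` (C \<union> ideal_gens p rels n) \<subseteq> ncpoly.span (?P \<union> ?Q)"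
      using ncpoly.span_mono[of ?P "?P \<union> ?Q"] ncpoly.span_superset[of "?P \<union> ?Q"]
      by (simp add: image_Un) (meson Un_upper1 Un_upper2 subset_trans)
    then have "ncpoly.span (nc_mult r ` (C \<union> ideal_gens p rels n)) \<subseteq> ncpoly.span (?P \<union> ?Q)"
      by (simp add: ncpoly.span_minimal ncpoly.subspace_span)
    moreover have "g \<in> ncpoly.span (nc_mult r ` (C \<union> ideal_gens p rels n))"
      using 2 assms(2) mult.span_image by blast
    ultimately show ?thesis
      by blast
  qed
qed

lemma dim_ideal_gens_Suc_Suc_le:
  fixes rels :: "'k::field ncpoly set"
  assumes "quadratic_rels p rels"
  shows "ncpoly.dim (ideal_gens p rels (Suc (Suc n))) + card rels * ncpoly.dim (ideal_gens p rels n)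
      \<le> p * ncpoly.dim (ideal_gens p rels (Suc n)) + card rels * p ^ n"
proof -
  let ?G = "ideal_gens p rels"
  have fin: "finite rels" "\<And>m. finite (?G m)"
    using assms finite_ideal_gens by (auto simp: quadratic_rels_def)
  obtain C where C: "finite C" "card C + ncpoly.dim (?G n) = p ^ n"
      "mon ` words p n \<subseteq> ncpoly.span (C \<union> ?G n)"
    using ncpoly.exists_complement_of_subset_span[OF finite_imageI[OF finite_words]
        ideal_gens_subset_span_mon[OF assms]] dim_mon_words by metis
  define P where "P = (\<Union>x<p. nc_mult (nc_var x) ` ?G (Suc n))"
  define Q where "Q = (\<lambda>(r, c). nc_mult r c) ` (rels \<times> C)"
  have "finite P" "finite Q"
    using fin C(1) by (auto simp: P_def Q_def)
  have "ncpoly.dim (?G (Suc (Suc n))) \<le> ncpoly.dim (P \<union> Q)"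
    using ideal_gens_Suc_Suc_subset_span[OF assms C(3)] \<open>finite P\<close> \<open>finite Q\<close>
    unfolding P_def Q_def by (intro ncpoly.dim_le_dim_of_subset_span) auto
  also have "\<dots> \<le> ncpoly.dim P + ncpoly.dim Q"
    using \<open>finite P\<close> \<open>finite Q\<close> by (rule ncpoly.dim_Un_le)
  finally have "ncpoly.dim (?G (Suc (Suc n))) \<le> ncpoly.dim P + ncpoly.dim Q" .
  moreover have "ncpoly.dim P \<le> (\<Sum>x<p. ncpoly.dim (nc_mult (nc_var x) ` ?G (Suc n)))"
    unfolding P_def using fin by (intro ncpoly.dim_UN_le) auto
  moreover have "\<dots> \<le> (\<Sum>x<p. ncpoly.dim (?G (Suc n)))"
    using fin by (intro sum_mono ncpoly.dim_linear_image_le linear_nc_mult_right)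
  moreover have "ncpoly.dim Q \<le> card Q"
    using \<open>finite Q\<close> by (rule ncpoly.dim_le_card')
  moreover have "card Q \<le> card rels * card C"
    unfolding Q_def using card_image_le[of "rels \<times> C"] fin C(1) by (simp add: card_cartesian_product)
  moreover have "card rels * card C + card rels * ncpoly.dim (?G n) = card rels * p ^ n"
    using C(2) by (metis add_mult_distrib2)
  ultimately show ?thesis
    by simp
qed

lemma linear_recurrence_lower_bound:
  fixes e :: "nat \<Rightarrow> 'a::linordered_idom"
  assumes rec: "\<And>n. g * e (Suc n) - d * e n \<le> e (Suc (Suc n))"
    and c: "0 < c" "c * c + d \<le> g * c" and "0 \<le> d"
    and e01: "0 < e 0" "c * e 0 \<le> e 1"
  shows "0 < e n \<and> c * e n \<le> e (Suc n)"
proof (induction n)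
  case 0
  then show ?case
    using e01 by simp
next
  case (Suc n)
  then have pos: "0 < e (Suc n)"
    using mult_pos_pos[OF c(1), of "e n"] by linarith
  have "d * e (Suc n) \<le> (g * c - c * c) * e (Suc n)"
    using c(2) pos by (intro mult_right_mono) simp_all
  moreover have "d * (c * e n) \<le> d * e (Suc n)"
    using Suc \<open>0 \<le> d\<close> by (intro mult_left_mono) simp_all
  ultimately have "c * (d * e n) \<le> c * ((g - c) * e (Suc n))"
    by (simp add: algebra_simps)
  then have "d * e n \<le> (g - c) * e (Suc n)"
    using c(1) by (simp only: mult_le_cancel_left_pos)
  with rec[of n] pos show ?case
    by (simp add: algebra_simps)
qed

lemma dim_ideal_gens_less:
  fixes rels :: "'k::field ncpoly set" and c :: nat
  assumes rels: "quadratic_rels p rels" and c: "0 < c" "c * c + card rels \<le> p * c"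
  shows "ncpoly.dim (ideal_gens p rels n) < p ^ n"
proof -
  define D where "D n = ncpoly.dim (ideal_gens p rels n)" for n
  define e where "e n = int (p ^ n) - int (D n)" for n
  have "0 < e n \<and> int c * e n \<le> e (Suc n)"
  proof (rule linear_recurrence_lower_bound[where g = "int p" and d = "int (card rels)"])
    show "int p * e (Suc n) - int (card rels) * e n \<le> e (Suc (Suc n))" for n
    proof -
      have "int (D (Suc (Suc n)) + card rels * D n) \<le> int (p * D (Suc n) + card rels * p ^ n)"
        using dim_ideal_gens_Suc_Suc_le[OF rels, of n] unfolding D_def by (simp only: of_nat_le_iff)
      then show ?thesis
        unfolding e_def by (simp add: algebra_simps)
    qed
    have "D 0 = 0" "D 1 = 0"
      using ncpoly.dim_le_card'[of "{} :: 'k ncpoly set"] by (simp_all add: D_def)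
    moreover have "c \<le> p"
      using c by (metis le_add1 mult_le_cancel2 order_trans)
    ultimately show "0 < e 0" "int c * e 0 \<le> e 1"
      by (simp_all add: e_def)
    show "0 < int c" "int c * int c + int (card rels) \<le> int p * int c"
      using c by (simp_all flip: of_nat_mult of_nat_add)
  qed simp
  then show ?thesis
    by (simp add: e_def D_def)
qed

lemma exists_mon_notin_span_ideal_gens:
  fixes rels :: "'k::field ncpoly set" and c :: nat
  assumes "quadratic_rels p rels" "0 < c" "c * c + card rels \<le> p * c"
  obtains w where "w \<in> words p n" "(mon w :: 'k ncpoly) \<notin> ncpoly.span (ideal_gens p rels n)"
proof -
  have "\<not> mon ` words p n \<subseteq> ncpoly.span (ideal_gens p rels n)"
  proof
    assume "mon ` words p n \<subseteq> ncpoly.span (ideal_gens p rels n)"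
    then have "ncpoly.dim (mon ` words p n :: 'k ncpoly set) \<le> ncpoly.dim (ideal_gens p rels n)"
      using finite_ideal_gens assms(1)
      by (intro ncpoly.dim_le_dim_of_subset_span) (auto simp: quadratic_rels_def)
    with dim_ideal_gens_less[OF assms, of n] show False
      by (simp add: dim_mon_words)
  qed
  with that show ?thesis
    by blast
qed

theorem quadratic_quotient_not_fin_dim:
  fixes rels :: "'k::field ncpoly set" and c :: nat
  assumes rels: "quadratic_rels p rels" and c: "0 < c" "c * c + card rels \<le> p * c"
  shows "\<not> quotient_fin_dim p rels"
proof
  assume "quotient_fin_dim p rels"
  then obtain S :: "'k ncpoly set" where S: "finite S" "S \<subseteq> ncpoly_set p"
    and spans: "\<And>f. f \<in> ncpoly_set p \<Longrightarrow>
      \<exists>a. (\<lambda>w. f w - (\<Sum>s\<in>S. a s * s w)) \<in> nc_ideal p rels"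
    unfolding quotient_fin_dim_def by blast
  have "finite (length ` (\<Union>s\<in>S. {w. s w \<noteq> 0}))"
    using S by (auto simp: ncpoly_set_def)
  then obtain N where N: "\<And>s w. s \<in> S \<Longrightarrow> s w \<noteq> 0 \<Longrightarrow> length w < N"
    unfolding finite_nat_set_iff_bounded by blast
  obtain w where w: "w \<in> words p N" "mon w \<notin> ncpoly.span (ideal_gens p rels N)"
    using exists_mon_notin_span_ideal_gens[OF rels c] .
  have "mon w \<in> ncpoly_set p"
    using w(1) by (auto simp: ncpoly_set_def mon_def words_def)
  then obtain a where a: "(\<lambda>x. mon w x - (\<Sum>s\<in>S. a s * s x)) \<in> nc_ideal p rels"
    using spans by blast
  have "(\<Sum>s\<in>S. a s * s x) = 0" if "length x = N" for x
  proof (intro sum.neutral ballI)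
    fix s
    assume "s \<in> S"
    with N[of s x] that show "a s * s x = 0"
      by auto
  qed
  then have "homog_part N (\<lambda>x. mon w x - (\<Sum>s\<in>S. a s * s x)) = mon w"
    using w(1) by (auto simp: fun_eq_iff homog_part_def mon_def words_def)
  with homog_part_ideal_in_span_ideal_gens[OF rels a, of N] w(2) show False
    by metis
qed

section \<open>The relations of \<open>R\<^sup>2\<^sub>p\<close>\<close>

lemma R2_rels_eq: "R2_rels p =
    (\<lambda>i. mon [i, i]) ` {..<p} \<union>
    (\<lambda>j. (\<lambda>w. \<Sum>i<p. mon [i, (i + j) mod p] w)) ` {1..p - 1}"
  by (auto simp: R2_rels_def nc_var_eq_mon nc_mult_mon_mon)

lemma card_R2_rels_le: "card (R2_rels p :: 'k::field ncpoly set) \<le> 2 * p"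
proof -
  have "card (R2_rels p :: 'k ncpoly set) \<le> card {..<p} + card {1..p - 1}"
    unfolding R2_rels_eq by (intro card_Un_le[THEN order_trans] add_mono card_image_le) auto
  then show ?thesis
    by simp
qed

lemma quadratic_R2_rels: "quadratic_rels p (R2_rels p :: 'k::field ncpoly set)"
  unfolding quadratic_rels_def
proof
  show "finite (R2_rels p :: 'k ncpoly set)"
    by (simp add: R2_rels_eq)
  show "\<forall>r\<in>R2_rels p. homogeneous p 2 (r :: 'k ncpoly)"
    unfolding R2_rels_eq homogeneous_def
  proof (intro ballI allI impI; elim UnE imageE)
    fix w r i
    assume "r = mon [i, i]" "i \<in> {..<p}" "r w \<noteq> 0"
    then show "w \<in> words p 2"
      by (auto simp: mon_def words_def split: if_splits)
  next
    fix w r j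
    assume "r = (\<lambda>w. \<Sum>i<p. mon [i, (i + j) mod p] w)" "r w \<noteq> (0 :: 'k)"
    then obtain i where "i < p" "(mon [i, (i + j) mod p] w :: 'k) \<noteq> 0"
      by (auto elim: sum.not_neutral_contains_not_neutral)
    then show "w \<in> words p 2"
      by (auto simp: mon_def words_def split: if_splits)
  qed
qed

theorem proposition3p31:
  fixes p :: nat
  assumes "prime p" and "odd p" and "p > 7"
  shows "\<not> quotient_fin_dim p (R2_rels p :: ('k::field) ncpoly set)"
proof (rule quadratic_quotient_not_fin_dim[OF quadratic_R2_rels])
  have "9 \<le> p"
    using assms(2,3) by presburger
  then show "3 * 3 + card (R2_rels p :: 'k ncpoly set) \<le> p * 3"
    using card_R2_rels_le[where 'k = 'k, of p] by linarith
qed simp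

end
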